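(* Let $P$ be a finite poset and $t\geq 2$ an integer, and suppose $\mathrm{sat}^{\star}([t]^n,P)=O(1)$ as $n\to\infty$. Then there exists $N\in\mathbb{Z}_{>0}$ such that the function $n\mapsto\mathrm{sat}^{\star}([t]^n,P)$ is constant on the integers $n>N$.
   Context: For positive integers $n,t$, $[n]=\{1,\dots,n\}$ and the hypergrid $[t]^n$ is the set of functions $f:[n]\to[t]$, partially ordered by $f\leq g$ iff $f(i)\leq g(i)$ for all $i\in[n]$. An induced copy of a poset $P$ in a family $\mathcal{F}\subseteq[t]^n$ is an injective map $\phi:P\to\mathcal{F}$ such that $\phi(x)\leq\phi(y)$ iff $x\leq_P y$. A family $\mathcal{F}\subseteq[t]^n$ is induced $P$-free if it contains no induced copy of $P$; it is induced $P$-saturated if it is induced $P$-free and for every $f\in[t]^n\setminus\mathcal{F}$ the family $\mathcal{F}\cup\{f\}$ contains an induced copy of $P$. Whenever $P$ embeds as an induced subposet of $[t]^n$, $\mathrm{sat}^{\star}([t]^n,P)$ denotes the minimum size of an induced $P$-saturated family in $[t]^n$. *)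

theory Defs
  imports Main "HOL-Library.FuncSet" "HOL-Library.Landau_Symbols"
begin

text \<open>The hypergrid [t]^n: functions [n] -> [t], represented extensionally
  (value undefined outside {1..n}).\<close>
definition grid :: "nat \<Rightarrow> nat \<Rightarrow> (nat \<Rightarrow> nat) set" where
  "grid t n = ({1..n} \<rightarrow>\<^sub>E {1..t})"

definition grid_le :: "nat \<Rightarrow> (nat \<Rightarrow> nat) \<Rightarrow> (nat \<Rightarrow> nat) \<Rightarrow> bool" where
  "grid_le n f g \<longleftrightarrow> (\<forall>i\<in>{1..n}. f i \<le> g i)"

definition is_finite_poset :: "'a set \<Rightarrow> ('a \<Rightarrow> 'a \<Rightarrow> bool) \<Rightarrow> bool" where
  "is_finite_poset X le \<longleftrightarrow> finite X
     \<and> (\<forall>x\<in>X. le x x)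
     \<and> (\<forall>x\<in>X. \<forall>y\<in>X. le x y \<and> le y x \<longrightarrow> x = y)
     \<and> (\<forall>x\<in>X. \<forall>y\<in>X. \<forall>z\<in>X. le x y \<and> le y z \<longrightarrow> le x z)"

definition induced_copy ::
  "nat \<Rightarrow> 'a set \<Rightarrow> ('a \<Rightarrow> 'a \<Rightarrow> bool) \<Rightarrow> (nat \<Rightarrow> nat) set \<Rightarrow> ('a \<Rightarrow> (nat \<Rightarrow> nat)) \<Rightarrow> bool" where
  "induced_copy n X le F \<phi> \<longleftrightarrow> inj_on \<phi> X \<and> \<phi> ` X \<subseteq> F
     \<and> (\<forall>x\<in>X. \<forall>y\<in>X. grid_le n (\<phi> x) (\<phi> y) \<longleftrightarrow> le x y)"

definition induced_free ::
  "nat \<Rightarrow> 'a set \<Rightarrow> ('a \<Rightarrow> 'a \<Rightarrow> bool) \<Rightarrow> (nat \<Rightarrow> nat) set \<Rightarrow> bool" where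
  "induced_free n X le F \<longleftrightarrow> \<not> (\<exists>\<phi>. induced_copy n X le F \<phi>)"

definition induced_saturated ::
  "nat \<Rightarrow> nat \<Rightarrow> 'a set \<Rightarrow> ('a \<Rightarrow> 'a \<Rightarrow> bool) \<Rightarrow> (nat \<Rightarrow> nat) set \<Rightarrow> bool" where
  "induced_saturated t n X le F \<longleftrightarrow> F \<subseteq> grid t n \<and> induced_free n X le F
     \<and> (\<forall>f \<in> grid t n - F. \<not> induced_free n X le (insert f F))"

definition sat_star :: "nat \<Rightarrow> nat \<Rightarrow> 'a set \<Rightarrow> ('a \<Rightarrow> 'a \<Rightarrow> bool) \<Rightarrow> nat" where
  "sat_star t n X le = Min (card ` {F. induced_saturated t n X le F})"

end

theory Submission
  imports Defs
begin

text \<open>Let \<open>F\<close> be an induced \<open>P\<close>-saturated family in \<open>[t]^(m+1)\<close> with \<open>t ^ |F| \<le> m\<close>.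
  By pigeonhole, two coordinates \<open>d \<noteq> q\<close> agree on every member of \<open>F\<close>. Deleting coordinate
  \<open>d\<close> is an order isomorphism from the diagonal \<open>{f. f d = f q}\<close> onto \<open>[t]^m\<close>, and it maps
  \<open>F\<close> to an induced \<open>P\<close>-saturated family of the same size in \<open>[t]^m\<close>. Hence
  \<open>sat*([t]^m, P) \<le> sat*([t]^(m+1), P)\<close> whenever \<open>t ^ sat*([t]^(m+1), P) \<le> m\<close>, so a bounded
  \<open>sat*\<close> is eventually non-decreasing and therefore eventually constant.\<close>

lemma finite_grid: "finite (grid t n)"
  unfolding grid_def by (intro finite_PiE) auto

lemma grid_le_antisym:
  assumes "f \<in> grid t n" "g \<in> grid t n" "grid_le n f g" "grid_le n g f"
  shows "f = g"
  using assms unfolding grid_def grid_le_def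
  by (intro PiE_ext[of f "{1..n}" "\<lambda>_. {1..t}" g]) (auto intro: antisym)

definition grid_embedding ::
  "nat \<Rightarrow> nat \<Rightarrow> (nat \<Rightarrow> nat) set \<Rightarrow> ((nat \<Rightarrow> nat) \<Rightarrow> nat \<Rightarrow> nat) \<Rightarrow> bool" where
  "grid_embedding n m A h \<longleftrightarrow> (\<forall>a\<in>A. \<forall>b\<in>A. grid_le m (h a) (h b) \<longleftrightarrow> grid_le n a b)"

lemma grid_embedding_subset:
  "grid_embedding n m A h \<Longrightarrow> B \<subseteq> A \<Longrightarrow> grid_embedding n m B h"
  unfolding grid_embedding_def by blast

lemma grid_embedding_inj_on:
  assumes "A \<subseteq> grid t n" "grid_embedding n m A h"
  shows "inj_on h A"
proof (rule inj_onI)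
  fix a b assume ab: "a \<in> A" "b \<in> A" and "h a = h b"
  then have "grid_le m (h a) (h b)" "grid_le m (h b) (h a)"
    by (simp_all add: grid_le_def)
  then have "grid_le n a b" "grid_le n b a"
    using assms(2) ab by (simp_all add: grid_embedding_def)
  then show "a = b"
    using grid_le_antisym assms(1) ab by blast
qed

lemma induced_copy_image:
  assumes A: "A \<subseteq> grid t n" and h: "grid_embedding n m A h"
    and copy: "induced_copy n X le A \<phi>"
  shows "induced_copy m X le (h ` A) (h \<circ> \<phi>)"
proof -
  have inj: "inj_on \<phi> X" and img: "\<phi> ` X \<subseteq> A"
    and ord: "\<And>x y. x \<in> X \<Longrightarrow> y \<in> X \<Longrightarrow> grid_le n (\<phi> x) (\<phi> y) \<longleftrightarrow> le x y"
    using copy unfolding induced_copy_def by auto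
  have "inj_on h (\<phi> ` X)"
    using grid_embedding_inj_on[OF A h] img by (rule inj_on_subset)
  with inj have "inj_on (h \<circ> \<phi>) X"
    by (rule comp_inj_on)
  moreover have "(h \<circ> \<phi>) ` X \<subseteq> h ` A"
    using img by auto
  moreover have "grid_le m ((h \<circ> \<phi>) x) ((h \<circ> \<phi>) y) \<longleftrightarrow> le x y" if "x \<in> X" "y \<in> X" for x y
  proof -
    have "\<phi> x \<in> A" "\<phi> y \<in> A"
      using img that by auto
    then show ?thesis
      using h ord[OF that] unfolding grid_embedding_def by simp
  qed
  ultimately show ?thesis
    unfolding induced_copy_def by blast
qed

lemma induced_copy_inv_image:
  assumes h: "grid_embedding n m A h" and copy: "induced_copy m X le (h ` A) \<phi>"
  shows "induced_copy n X le A (inv_into A h \<circ> \<phi>)"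
proof -
  have inj: "inj_on \<phi> X" and img: "\<phi> ` X \<subseteq> h ` A"
    and ord: "\<And>x y. x \<in> X \<Longrightarrow> y \<in> X \<Longrightarrow> grid_le m (\<phi> x) (\<phi> y) \<longleftrightarrow> le x y"
    using copy unfolding induced_copy_def by auto
  have inv: "inv_into A h (\<phi> x) \<in> A" "h (inv_into A h (\<phi> x)) = \<phi> x" if "x \<in> X" for x
  proof -
    have "\<phi> x \<in> h ` A"
      using img that by blast
    then show "inv_into A h (\<phi> x) \<in> A" "h (inv_into A h (\<phi> x)) = \<phi> x"
      by (simp_all add: inv_into_into f_inv_into_f)
  qed
  have "inj_on (inv_into A h \<circ> \<phi>) X"
  proof (rule inj_onI)
    fix x y assume "x \<in> X" "y \<in> X" "(inv_into A h \<circ> \<phi>) x = (inv_into A h \<circ> \<phi>) y"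
    then have "\<phi> x = \<phi> y"
      using inv(2) by (metis comp_apply)
    then show "x = y"
      using \<open>x \<in> X\<close> \<open>y \<in> X\<close> by (rule inj_onD[OF inj])
  qed
  moreover have "(inv_into A h \<circ> \<phi>) ` X \<subseteq> A"
    using inv(1) by auto
  moreover have "grid_le n ((inv_into A h \<circ> \<phi>) x) ((inv_into A h \<circ> \<phi>) y) \<longleftrightarrow> le x y"
    if "x \<in> X" "y \<in> X" for x y
  proof -
    have "grid_le n (inv_into A h (\<phi> x)) (inv_into A h (\<phi> y))
        \<longleftrightarrow> grid_le m (h (inv_into A h (\<phi> x))) (h (inv_into A h (\<phi> y)))"
      using h inv(1)[OF that(1)] inv(1)[OF that(2)] unfolding grid_embedding_def by blast
    also have "\<dots> \<longleftrightarrow> le x y"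
      using inv(2)[OF that(1)] inv(2)[OF that(2)] ord[OF that] by simp
    finally show ?thesis
      by simp
  qed
  ultimately show ?thesis
    unfolding induced_copy_def by blast
qed

lemma induced_free_image_iff:
  assumes "A \<subseteq> grid t n" and "grid_embedding n m A h"
  shows "induced_free m X le (h ` A) \<longleftrightarrow> induced_free n X le A"
  unfolding induced_free_def
  using induced_copy_image[OF assms] induced_copy_inv_image[OF assms(2)] by blast

lemma induced_saturated_image:
  assumes sat: "induced_saturated t n X le F"
    and "F \<subseteq> G" "G \<subseteq> grid t n" "h ` G = grid t m" "grid_embedding n m G h"
  shows "induced_saturated t m X le (h ` F)" "card (h ` F) = card F"
proof -
  have free: "induced_free n X le F"
    and saturating: "\<And>f. f \<in> grid t n - F \<Longrightarrow> \<not> induced_free n X le (insert f F)"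
    using sat unfolding induced_saturated_def by auto
  have "\<not> induced_free m X le (insert g (h ` F))" if g: "g \<in> grid t m - h ` F" for g
  proof -
    obtain f where f: "f \<in> G" "g = h f"
      using g assms(4) by (metis DiffD1 imageE)
    then have "f \<in> grid t n - F"
      using g assms(3) by auto
    then have "\<not> induced_free n X le (insert f F)"
      by (rule saturating)
    moreover have "insert f F \<subseteq> G"
      using f assms(2) by blast
    ultimately show ?thesis
      using f assms(3,5) induced_free_image_iff[of "insert f F" t n m h X le]
      by (auto intro: grid_embedding_subset)
  qed
  moreover have "induced_free m X le (h ` F)"
    using free assms(2,3,5) induced_free_image_iff[of F t n m h X le]
    by (auto intro: grid_embedding_subset)
  moreover have "h ` F \<subseteq> grid t m"
    using assms(2,4) by blast
  ultimately show "induced_saturated t m X le (h ` F)"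
    unfolding induced_saturated_def by blast
  show "card (h ` F) = card F"
    using assms(2,3,5) by (intro card_image inj_on_subset[OF grid_embedding_inj_on]) auto
qed

definition diagonal :: "nat \<Rightarrow> nat \<Rightarrow> nat \<Rightarrow> nat \<Rightarrow> (nat \<Rightarrow> nat) set" where
  "diagonal t n d q = {f \<in> grid t n. f d = f q}"

text \<open>Coordinate \<open>d\<close> is deleted by moving coordinate \<open>m + 1\<close> into its place.\<close>
definition delete_index :: "nat \<Rightarrow> nat \<Rightarrow> nat \<Rightarrow> nat" where
  "delete_index m d k = (if k = d then Suc m else k)"

definition delete_coord :: "nat \<Rightarrow> nat \<Rightarrow> (nat \<Rightarrow> nat) \<Rightarrow> nat \<Rightarrow> nat" where
  "delete_coord m d f = restrict (f \<circ> delete_index m d) {1..m}"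

lemma inj_on_delete_index: "inj_on (delete_index m d) {1..m}"
  unfolding delete_index_def by (rule inj_onI) (auto split: if_splits)

lemma delete_index_image:
  assumes "d \<in> {1..Suc m}"
  shows "delete_index m d ` {1..m} = {1..Suc m} - {d}"
  using assms unfolding delete_index_def by (auto simp: image_iff le_Suc_eq)

lemma grid_le_delete_coord:
  assumes "d \<in> {1..Suc m}"
  shows "grid_le m (delete_coord m d a) (delete_coord m d b) \<longleftrightarrow> (\<forall>j \<in> {1..Suc m} - {d}. a j \<le> b j)"
proof -
  have "grid_le m (delete_coord m d a) (delete_coord m d b) \<longleftrightarrow>
      (\<forall>j \<in> delete_index m d ` {1..m}. a j \<le> b j)"
    unfolding grid_le_def delete_coord_def by simp
  then show ?thesis
    by (simp only: delete_index_image[OF assms])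
qed

lemma delete_coord_in_grid:
  assumes f: "f \<in> grid t (Suc m)" and d: "d \<in> {1..Suc m}"
  shows "delete_coord m d f \<in> grid t m"
proof -
  have "f (delete_index m d k) \<in> {1..t}" if "k \<in> {1..m}" for k
  proof -
    have "delete_index m d k \<in> {1..Suc m}"
      using that delete_index_image[OF d] by blast
    then show ?thesis
      using f unfolding grid_def by (rule PiE_mem[rotated])
  qed
  then show ?thesis
    unfolding grid_def delete_coord_def by simp
qed

text \<open>Inverts \<open>delete_index\<close>, reading slot \<open>d\<close> from slot \<open>q\<close> so that
  \<open>g \<circ> restore_index m d q\<close> lies on the diagonal.\<close>
definition restore_index :: "nat \<Rightarrow> nat \<Rightarrow> nat \<Rightarrow> nat \<Rightarrow> nat" where
  "restore_index m d q k = inv_into {1..m} (delete_index m d) (if k = d then q else k)"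

context
  fixes m d q :: nat
  assumes d: "d \<in> {1..Suc m}" and q: "q \<in> {1..Suc m}" and "d \<noteq> q"
begin

lemma grid_le_diagonal:
  assumes "a d = a q" "b d = b q"
  shows "grid_le (Suc m) a b \<longleftrightarrow> (\<forall>j \<in> {1..Suc m} - {d}. a j \<le> b j)"
  using assms q \<open>d \<noteq> q\<close> unfolding grid_le_def by (metis Diff_iff singletonD)

lemma grid_embedding_delete_coord:
  "grid_embedding (Suc m) m (diagonal t (Suc m) d q) (delete_coord m d)"
  unfolding grid_embedding_def
proof (intro ballI)
  fix a b assume "a \<in> diagonal t (Suc m) d q" "b \<in> diagonal t (Suc m) d q"
  then have "a d = a q" "b d = b q"
    unfolding diagonal_def by auto
  then show "grid_le m (delete_coord m d a) (delete_coord m d b) \<longleftrightarrow> grid_le (Suc m) a b"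
    by (simp only: grid_le_delete_coord[OF d] grid_le_diagonal)
qed

lemma delete_coord_diagonal_subset: "delete_coord m d ` diagonal t (Suc m) d q \<subseteq> grid t m"
  using delete_coord_in_grid[OF _ d] unfolding diagonal_def by blast

lemma restore_index_in_range: "k \<in> {1..Suc m} \<Longrightarrow> restore_index m d q k \<in> {1..m}"
proof -
  assume "k \<in> {1..Suc m}"
  then have "(if k = d then q else k) \<in> delete_index m d ` {1..m}"
    using q \<open>d \<noteq> q\<close> delete_index_image[OF d] by auto
  then show ?thesis
    unfolding restore_index_def by (rule inv_into_into)
qed

lemma restore_delete_index: "k \<in> {1..m} \<Longrightarrow> restore_index m d q (delete_index m d k) = k"
proof -
  assume k: "k \<in> {1..m}"
  then have "delete_index m d k \<noteq> d"
    using delete_index_image[OF d] by blast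
  then show ?thesis
    unfolding restore_index_def using inj_on_delete_index k by (simp add: inv_into_f_f)
qed

lemma grid_subset_delete_coord_diagonal: "grid t m \<subseteq> delete_coord m d ` diagonal t (Suc m) d q"
proof
  fix g assume g: "g \<in> grid t m"
  define f where "f = restrict (g \<circ> restore_index m d q) {1..Suc m}"
  have "g (restore_index m d q k) \<in> {1..t}" if "k \<in> {1..Suc m}" for k
    using g restore_index_in_range[OF that] unfolding grid_def by (rule PiE_mem)
  then have "f \<in> grid t (Suc m)"
    unfolding f_def grid_def by simp
  moreover have "f d = f q"
    using d q unfolding f_def by (simp add: restore_index_def)
  moreover have "delete_coord m d f = g"
  proof
    fix k show "delete_coord m d f k = g k"
    proof (cases "k \<in> {1..m}")
      case True
      then have "delete_index m d k \<in> {1..Suc m}"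
        using delete_index_image[OF d] by blast
      then show ?thesis
        using True restore_delete_index[OF True] unfolding delete_coord_def f_def by simp
    next
      case False
      then have "g k = undefined"
        using g unfolding grid_def by (intro PiE_arb)
      then show ?thesis
        using False unfolding delete_coord_def by auto
    qed
  qed
  ultimately show "g \<in> delete_coord m d ` diagonal t (Suc m) d q"
    unfolding diagonal_def by blast
qed

lemma delete_coord_diagonal: "delete_coord m d ` diagonal t (Suc m) d q = grid t m"
  using delete_coord_diagonal_subset grid_subset_delete_coord_diagonal by (rule subset_antisym)

end

lemma small_family_subset_diagonal:
  assumes F: "F \<subseteq> grid t n" and small: "t ^ card F < n"
  shows "\<exists>d\<in>{1..n}. \<exists>q\<in>{1..n}. d \<noteq> q \<and> F \<subseteq> diagonal t n d q"
proof -
  define column where "column i = restrict (\<lambda>f. f i) F" for i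
  have "finite F"
    using F finite_grid finite_subset by blast
  have "f i \<in> {1..t}" if "f \<in> F" "i \<in> {1..n}" for f i
  proof -
    have "f \<in> {1..n} \<rightarrow>\<^sub>E {1..t}"
      using F that(1) unfolding grid_def by blast
    then show ?thesis
      using that(2) by (rule PiE_mem)
  qed
  then have "column ` {1..n} \<subseteq> F \<rightarrow>\<^sub>E {1..t}"
    unfolding column_def by auto
  then have "card (column ` {1..n}) \<le> card (F \<rightarrow>\<^sub>E {1..t})"
    using \<open>finite F\<close> by (intro card_mono finite_PiE) auto
  also have "\<dots> = t ^ card F"
    using \<open>finite F\<close> by (simp add: card_PiE)
  finally have "card (column ` {1..n}) \<le> t ^ card F" .
  then have "\<not> inj_on column {1..n}"
    using small by (intro pigeonhole) simp
  then obtain d q where "d \<in> {1..n}" "q \<in> {1..n}" "d \<noteq> q" "column d = column q"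
    unfolding inj_on_def by blast
  moreover have "f d = f q" if "f \<in> F" for f
    using fun_cong[OF \<open>column d = column q\<close>, of f] that unfolding column_def by simp
  ultimately show ?thesis
    using F unfolding diagonal_def by blast
qed

lemma induced_saturated_lower_dim:
  assumes sat: "induced_saturated t (Suc m) X le F" and small: "t ^ card F < Suc m"
  shows "\<exists>F'. induced_saturated t m X le F' \<and> card F' = card F"
proof -
  have "F \<subseteq> grid t (Suc m)"
    using sat unfolding induced_saturated_def by blast
  then obtain d q where dq: "d \<in> {1..Suc m}" "q \<in> {1..Suc m}" "d \<noteq> q"
    and diag: "F \<subseteq> diagonal t (Suc m) d q"
    using small_family_subset_diagonal small by blast
  have "diagonal t (Suc m) d q \<subseteq> grid t (Suc m)"
    unfolding diagonal_def by blast
  from induced_saturated_image[OF sat diag this delete_coord_diagonal[OF dq] grid_embedding_delete_coord[OF dq]]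
  show ?thesis
    by blast
qed

lemma finite_grid_families: "finite {F. F \<subseteq> grid t n \<and> P F}"
proof (rule finite_subset)
  show "{F. F \<subseteq> grid t n \<and> P F} \<subseteq> Pow (grid t n)"
    by blast
  show "finite (Pow (grid t n))"
    using finite_grid by (rule finite_Pow_iff[THEN iffD2])
qed

lemma finite_induced_saturated: "finite {F. induced_saturated t n X le F}"
  unfolding induced_saturated_def by (rule finite_grid_families)

lemma ex_induced_saturated:
  assumes "X \<noteq> {}"
  shows "\<exists>F. induced_saturated t n X le F"
proof -
  let ?C = "{F. F \<subseteq> grid t n \<and> induced_free n X le F}"
  have "induced_free n X le {}"
    using assms unfolding induced_free_def induced_copy_def by simp
  then have nonempty: "?C \<noteq> {}"
    by blast
  from finite_has_maximal[OF finite_grid_families nonempty]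
  obtain F where F: "F \<in> ?C" and maximal: "\<forall>G\<in>?C. F \<subseteq> G \<longrightarrow> F = G"
    by (elim bexE)
  have "\<not> induced_free n X le (insert f F)" if f: "f \<in> grid t n - F" for f
  proof
    assume "induced_free n X le (insert f F)"
    then have "insert f F \<in> ?C"
      using F f by blast
    then show False
      using maximal f by blast
  qed
  then show ?thesis
    using F unfolding induced_saturated_def by blast
qed

lemma sat_star_le:
  "induced_saturated t n X le F \<Longrightarrow> sat_star t n X le \<le> card F"
  unfolding sat_star_def using finite_induced_saturated by (intro Min_le finite_imageI) auto

lemma sat_star_attained:
  assumes "X \<noteq> {}"
  shows "\<exists>F. induced_saturated t n X le F \<and> card F = sat_star t n X le"
proof -
  have "sat_star t n X le \<in> card ` {F. induced_saturated t n X le F}"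
    unfolding sat_star_def using ex_induced_saturated[OF assms] finite_induced_saturated
    by (intro Min_in finite_imageI) auto
  then show ?thesis
    by auto
qed

lemma sat_star_le_Suc:
  assumes "X \<noteq> {}" and "t ^ sat_star t (Suc m) X le < Suc m"
  shows "sat_star t m X le \<le> sat_star t (Suc m) X le"
proof -
  obtain F where "induced_saturated t (Suc m) X le F" "card F = sat_star t (Suc m) X le"
    using sat_star_attained[OF assms(1)] by blast
  then obtain F' where "induced_saturated t m X le F'" "card F' = sat_star t (Suc m) X le"
    using induced_saturated_lower_dim assms(2) by metis
  then show ?thesis
    using sat_star_le by metis
qed

text \<open>No family is free of the empty poset, so \<open>sat_star\<close> is then \<open>Min {}\<close>: an unspecified
  value, but the same one for every \<open>n\<close>.\<close>
lemma sat_star_empty_poset: "sat_star t n {} le = sat_star t m {} le"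
proof -
  have "{F. induced_saturated t k {} le F} = {}" for k
    unfolding induced_saturated_def induced_free_def induced_copy_def by blast
  then show ?thesis
    unfolding sat_star_def by (simp only:)
qed

lemma sat_star_eventually_mono:
  assumes "X \<noteq> {}" and "t \<ge> 1" and "eventually (\<lambda>n. sat_star t n X le \<le> B) sequentially"
  shows "eventually (\<lambda>n. sat_star t n X le \<le> sat_star t (Suc n) X le) sequentially"
proof -
  let ?s = "\<lambda>n. sat_star t n X le"
  have "eventually (\<lambda>n. ?s (Suc n) \<le> B \<and> t ^ B \<le> n) sequentially"
    using eventually_sequentially_Suc[of "\<lambda>n. ?s n \<le> B", THEN iffD2, OF assms(3)]
      eventually_ge_at_top by (rule eventually_conj)
  then show ?thesis
  proof (rule eventually_mono)
    fix n assume n: "?s (Suc n) \<le> B \<and> t ^ B \<le> n"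
    then have "t ^ ?s (Suc n) \<le> t ^ B"
      using assms(2) by (intro power_increasing) auto
    then have "t ^ ?s (Suc n) < Suc n"
      using n by linarith
    then show "?s n \<le> ?s (Suc n)"
      by (rule sat_star_le_Suc[OF assms(1)])
  qed
qed

lemma eventually_bounded_if_bigo_1:
  fixes s :: "nat \<Rightarrow> nat"
  assumes "(\<lambda>n. real (s n)) \<in> O(\<lambda>_. 1)"
  shows "\<exists>B. eventually (\<lambda>n. s n \<le> B) sequentially"
proof -
  obtain c where "eventually (\<lambda>n. norm (real (s n)) \<le> c * norm (1::real)) sequentially"
    using assms by (elim landau_o.bigE)
  then have "eventually (\<lambda>n. s n \<le> nat \<lceil>c\<rceil>) sequentially"
    by (rule eventually_mono) (simp, linarith)
  then show ?thesis ..
qed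

lemma eventually_const_if_eventually_mono_bounded:
  fixes s :: "nat \<Rightarrow> nat"
  assumes "eventually (\<lambda>n. s n \<le> s (Suc n)) sequentially"
    and "eventually (\<lambda>n. s n \<le> B) sequentially"
  shows "\<exists>N. \<forall>n\<ge>N. s n = s N"
proof -
  obtain M where mono: "\<And>n. n \<ge> M \<Longrightarrow> s n \<le> s (Suc n)" and bounded: "\<And>n. n \<ge> M \<Longrightarrow> s n < Suc B"
    using eventually_conj[OF assms] unfolding eventually_sequentially by (meson le_imp_less_Suc)
  obtain N where "N \<ge> M" and maximal: "\<And>n. n \<ge> M \<Longrightarrow> s n \<le> s N"
    using ex_has_greatest_nat[of "\<lambda>n. n \<ge> M" M s "Suc B"] bounded by blast
  have "s N \<le> s n" if "N \<le> n" for n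
    using that
  proof (induction n rule: dec_induct)
    case (step k)
    then show ?case
      using mono[of k] \<open>N \<ge> M\<close> by simp
  qed simp
  then show ?thesis
    using maximal \<open>N \<ge> M\<close> by (metis le_antisym order_trans)
qed

theorem mainTheorem2:
  fixes X :: "'a set" and le :: "'a \<Rightarrow> 'a \<Rightarrow> bool" and t :: nat
  assumes "is_finite_poset X le"
    and "t \<ge> 2"
    and "(\<lambda>n. real (sat_star t n X le)) \<in> O(\<lambda>_. 1)"
  shows "\<exists>N::nat. N > 0 \<and> (\<forall>n m. n > N \<longrightarrow> m > N \<longrightarrow> sat_star t n X le = sat_star t m X le)"
proof (cases "X = {}")
  case True
  then show ?thesis
    using sat_star_empty_poset by blast
next
  case False
  obtain B where bounded: "eventually (\<lambda>n. sat_star t n X le \<le> B) sequentially"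
    using eventually_bounded_if_bigo_1[OF assms(3)] by blast
  have "t \<ge> 1"
    using assms(2) by simp
  from eventually_const_if_eventually_mono_bounded[OF sat_star_eventually_mono[OF False this bounded] bounded]
  obtain N where const: "\<forall>n\<ge>N. sat_star t n X le = sat_star t N X le"
    by (elim exE)
  show ?thesis
  proof (intro exI[of _ "Suc N"] conjI allI impI)
    fix n m assume "Suc N < n" "Suc N < m"
    then show "sat_star t n X le = sat_star t m X le"
      using const by (metis Suc_lessD less_imp_le)
  qed simp
qed

end
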